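(* Let $d,K\ge1$, $\lambda>0$. For each arm $a\in[K]$ let $X_a\in\mathbb{R}^{m_a\times d}$, $V_a=X_a^\top X_a+\lambda I$, and let $\hat\theta_a,\hat\theta'_a\in\mathbb{R}^d$ be the pre-attack and post-attack parameter estimates and $\alpha_a,\alpha'_a\in\mathbb{R}$ the corresponding pre-attack and post-attack exploration parameters (independent of the context). For $x\in\mathbb{R}^d$ define the pre-attack chosen arm $a(x)=\operatorname{argmax}_{a\in[K]}\{x^\top\hat\theta_a+\alpha_a\|x\|_{V_a^{-1}}\}$ and post-attack chosen arm $a'(x)=\operatorname{argmax}_{a\in[K]}\{x^\top\hat\theta'_a+\alpha'_a\|x\|_{V_a^{-1}}\}$, where $\|x\|_{V_a^{-1}}=\sqrt{x^\top V_a^{-1}x}$. Let $x\in\mathbb{R}^d$ be such that both maximizers are unique and $a(x)\neq a'(x)$. Then for every $c>0$, $a(cx)\neq a'(cx)$; moreover $a'(cx)=a'(x)$.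
   Context: Linear contextual bandit with UCB arm selection; the attack modifies historical rewards only, so $X_a$ and $V_a$ are the same before and after the attack, while the ridge estimates $\hat\theta_a$ change (e.g. post-attack $\hat\theta'_a=V_a^{-1}X_a^\top(y_a+\Delta_a)$). *)

theory Defs
  imports "HOL-Analysis.Analysis"
begin

text \<open>A design matrix X in R^(m x d) is given by the list of its m rows (each in R^d).
  gram_matrix X is X^T X.\<close>
definition gram_matrix :: "(real^'d) list \<Rightarrow> real^'d^'d" where
  "gram_matrix X = (\<chi> i j. \<Sum>r\<leftarrow>X. r $ i * r $ j)"

definition reg_design :: "real \<Rightarrow> (real^'d) list \<Rightarrow> real^'d^'d" where
  "reg_design lam X = gram_matrix X + lam *\<^sub>R mat 1"

definition inv_weighted_norm :: "real^'d^'d \<Rightarrow> real^'d \<Rightarrow> real" where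
  "inv_weighted_norm V x = sqrt (x \<bullet> (matrix_inv V *v x))"

definition ucb_score :: "(nat \<Rightarrow> real^'d) \<Rightarrow> (nat \<Rightarrow> real) \<Rightarrow> (nat \<Rightarrow> real^'d^'d)
    \<Rightarrow> real^'d \<Rightarrow> nat \<Rightarrow> real" where
  "ucb_score theta alpha V x a = x \<bullet> theta a + alpha a * inv_weighted_norm (V a) x"

definition chosen_arm :: "nat \<Rightarrow> (nat \<Rightarrow> real^'d) \<Rightarrow> (nat \<Rightarrow> real) \<Rightarrow> (nat \<Rightarrow> real^'d^'d)
    \<Rightarrow> real^'d \<Rightarrow> nat" where
  "chosen_arm K theta alpha V x = arg_max_on (ucb_score theta alpha V x) {1..K}"

definition unique_maximizer :: "nat \<Rightarrow> (nat \<Rightarrow> real^'d) \<Rightarrow> (nat \<Rightarrow> real) \<Rightarrow> (nat \<Rightarrow> real^'d^'d)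
    \<Rightarrow> real^'d \<Rightarrow> bool" where
  "unique_maximizer K theta alpha V x =
     (\<exists>!a. is_arg_max (ucb_score theta alpha V x) (\<lambda>b. b \<in> {1..K}) a)"

end

theory Submission
  imports Defs
begin

lemma inv_weighted_norm_scaleR:
  "inv_weighted_norm V (c *\<^sub>R x) = \<bar>c\<bar> * inv_weighted_norm V x"
proof -
  have "(c *\<^sub>R x) \<bullet> (matrix_inv V *v (c *\<^sub>R x)) = c\<^sup>2 * (x \<bullet> (matrix_inv V *v x))"
    by (simp add: matrix_vector_mult_scaleR power2_eq_square)
  then show ?thesis
    by (simp add: inv_weighted_norm_def real_sqrt_mult)
qed

lemma ucb_score_scaleR:
  assumes "c \<ge> 0"
  shows "ucb_score theta alpha V (c *\<^sub>R x) a = c * ucb_score theta alpha V x a"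
  using assms by (simp add: ucb_score_def inv_weighted_norm_scaleR algebra_simps)

lemma arg_max_on_cmult:
  fixes f :: "'a \<Rightarrow> 'b::linordered_field"
  assumes "c > 0"
  shows "arg_max_on (\<lambda>a. c * f a) S = arg_max_on f S"
proof -
  have "is_arg_max (\<lambda>a. c * f a) P = is_arg_max f P" for P
    using assms by (auto simp: is_arg_max_def fun_eq_iff)
  then show ?thesis
    by (simp add: arg_max_on_def arg_max_def)
qed

lemma chosen_arm_scaleR:
  assumes "c > 0"
  shows "chosen_arm K theta alpha V (c *\<^sub>R x) = chosen_arm K theta alpha V x"
proof -
  have "ucb_score theta alpha V (c *\<^sub>R x) = (\<lambda>a. c * ucb_score theta alpha V x a)"
    using assms by (simp add: ucb_score_scaleR fun_eq_iff)
  then show ?thesis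
    using assms by (simp add: chosen_arm_def arg_max_on_cmult)
qed

text \<open>Only \<open>differ\<close> is needed: \<^const>\<open>arg_max_on\<close> denotes one fixed maximizer
  whether or not it is unique, so scale invariance of the chosen arm holds unconditionally.\<close>

theorem proposition1:
  fixes K :: nat and lam :: real
    and X :: "nat \<Rightarrow> (real^'d) list"
    and theta theta' :: "nat \<Rightarrow> real^'d"
    and alpha alpha' :: "nat \<Rightarrow> real"
    and x :: "real^'d"
  defines "V \<equiv> (\<lambda>a. reg_design lam (X a))"
  assumes K: "K \<ge> 1" and lam: "lam > 0"
    and uniq: "unique_maximizer K theta alpha V x"
    and uniq': "unique_maximizer K theta' alpha' V x"
    and differ: "chosen_arm K theta alpha V x \<noteq> chosen_arm K theta' alpha' V x"
  shows "\<forall>c>0. chosen_arm K theta alpha V (c *\<^sub>R x) \<noteq> chosen_arm K theta' alpha' V (c *\<^sub>R x)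
              \<and> chosen_arm K theta' alpha' V (c *\<^sub>R x) = chosen_arm K theta' alpha' V x"
  using differ by (simp add: chosen_arm_scaleR)

end
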